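(* Let $\lambda$ be a nonzero real number and $x$ a real number with $1+\lambda x>0$. Then for every integer $n\ge0$, \[ \mathrm{Bel}_{n+1,\lambda}(x)=x\sum_{l=0}^{n}\binom{n}{l}\big(\mathrm{Bel}_{l,\lambda}(x)-\lambda\,\mathrm{Bel}_{l+1,\lambda}(x)\big). \]
   Context: For nonzero real $\lambda$, $e_\lambda(x)=(1+\lambda x)^{1/\lambda}$ and $e_\lambda^{-1}(x)=(1+\lambda x)^{-1/\lambda}$. The new type degenerate Bell polynomials $\mathrm{Bel}_{n,\lambda}(x)$ are defined by $e_{\lambda}(xe^{t})\,e_{\lambda}^{-1}(x)=\big(\frac{1+\lambda xe^t}{1+\lambda x}\big)^{1/\lambda}=\sum_{n=0}^{\infty}\mathrm{Bel}_{n,\lambda}(x)\frac{t^{n}}{n!}$ (expansion in powers of $t$). *)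

theory Defs
  imports "HOL-Analysis.Analysis"
begin

text \<open>Generating function of the new type degenerate Bell polynomials:
  G(t) = e_lam(x e^t) e_lam^{-1}(x) = ((1 + lam x e^t)/(1 + lam x)) powr (1/lam).\<close>
definition deg_bell_gf :: "real \<Rightarrow> real \<Rightarrow> real \<Rightarrow> real" where
  "deg_bell_gf lam x t = ((1 + lam * x * exp t) / (1 + lam * x)) powr (1 / lam)"

text \<open>Bel_{n,lam}(x) is n! times the coefficient of t^n in the expansion of the
  generating function in powers of t, i.e. its n-th derivative in t at t = 0.\<close>
definition Bel :: "nat \<Rightarrow> real \<Rightarrow> real \<Rightarrow> real" where
  "Bel n lam x = (deriv ^^ n) (deg_bell_gf lam x) 0"

end

theory Submission
  imports Defs "HOL-Complex_Analysis.Complex_Analysis"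
begin

text \<open>The generating function G satisfies G' = x e^t (1 + \<lambda> x e^t)^{-1} G, which can be rewritten
  as G' = x e^t (G - \<lambda> G'). Differentiating n times with the Leibniz rule, and using that all
  derivatives of x e^t equal x e^t, gives the recurrence at t = 0.
  The higher derivatives are handled in the holomorphic setting, where smoothness and the Leibniz
  rule come for free: G is continued analytically to the region Re (1 + \<lambda> x e^z) > 0 via the
  principal logarithm, and on the real axis the derivatives of G are the real parts of those of
  the continuation.\<close>

lemma higher_deriv_real_restriction:
  fixes G :: "real \<Rightarrow> real" and f :: "complex \<Rightarrow> complex"
  assumes hol: "f holomorphic_on T" and "open T" and "open S"
    and S_T: "\<And>s. s \<in> S \<Longrightarrow> complex_of_real s \<in> T"
    and G_f: "\<And>s. s \<in> S \<Longrightarrow> G s = Re (f (complex_of_real s))"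
    and "t \<in> S"
  shows "(deriv ^^ n) G t = Re ((deriv ^^ n) f (complex_of_real t))"
  using \<open>t \<in> S\<close>
proof (induction n arbitrary: t)
  case 0
  then show ?case using G_f by simp
next
  case (Suc n)
  have "\<forall>\<^sub>F s in nhds t. (deriv ^^ n) G s = Re ((deriv ^^ n) f (complex_of_real s))"
    using eventually_nhds_in_open[OF \<open>open S\<close> Suc.prems]
    by eventually_elim (use Suc.IH in auto)
  then have "deriv ((deriv ^^ n) G) t
      = deriv (\<lambda>s. Re ((deriv ^^ n) f (complex_of_real s))) t"
    by (rule deriv_cong_ev) simp
  also have "\<dots> = Re ((deriv ^^ Suc n) f (complex_of_real t))"
  proof (rule DERIV_imp_deriv)
    have "((deriv ^^ n) f has_field_derivative (deriv ^^ Suc n) f (complex_of_real t))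
            (at (complex_of_real t))"
      by (rule has_field_derivative_higher_deriv[OF hol \<open>open T\<close> S_T[OF Suc.prems]])
    then have "((\<lambda>s. (deriv ^^ n) f (complex_of_real s))
                 has_vector_derivative (deriv ^^ Suc n) f (complex_of_real t)) (at t)"
      by (rule has_vector_derivative_real_field)
    then show "((\<lambda>s. Re ((deriv ^^ n) f (complex_of_real s)))
                 has_field_derivative Re ((deriv ^^ Suc n) f (complex_of_real t))) (at t)"
      by (rule has_field_derivative_Re)
  qed
  finally show ?case by simp
qed

lemma higher_deriv_cmult_exp: "(deriv ^^ k) (\<lambda>w. c * exp w) = (\<lambda>w. c * exp (w::complex))"
proof (induction k)
  case (Suc k)
  have "deriv (\<lambda>w. c * exp w) = (\<lambda>w. c * exp (w::complex))"
    by (rule ext, rule DERIV_imp_deriv) (auto intro!: derivative_eq_intros)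
  with Suc show ?case by simp
qed simp

lemma higher_deriv_Suc_of_exp_ode:
  fixes f :: "complex \<Rightarrow> complex"
  assumes hol: "f holomorphic_on T" and "open T" and "z \<in> T"
    and ode: "\<And>w. w \<in> T \<Longrightarrow> deriv f w = c * exp w * (f w - a * deriv f w)"
  shows "(deriv ^^ Suc n) f z = c * exp z *
           (\<Sum>l = 0..n. of_nat (n choose l) * ((deriv ^^ l) f z - a * (deriv ^^ Suc l) f z))"
proof -
  define h where "h = (\<lambda>w. f w - a * deriv f w)"
  have hol': "deriv f holomorphic_on T"
    using hol \<open>open T\<close> by (rule holomorphic_deriv)
  have hol_h: "h holomorphic_on T"
    unfolding h_def using hol hol' \<open>open T\<close> by (intro holomorphic_intros)
  have higher_deriv_h: "(deriv ^^ l) h z = (deriv ^^ l) f z - a * (deriv ^^ Suc l) f z" for l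
  proof -
    have "(deriv ^^ l) h z = (deriv ^^ l) f z - (deriv ^^ l) (\<lambda>w. a * deriv f w) z"
      unfolding h_def
      by (rule higher_deriv_diff[OF hol _ \<open>open T\<close> \<open>z \<in> T\<close>])
         (intro holomorphic_intros hol' \<open>open T\<close>)
    also have "(deriv ^^ l) (\<lambda>w. a * deriv f w) z = a * (deriv ^^ l) (deriv f) z"
      by (rule higher_deriv_cmult[OF hol' \<open>z \<in> T\<close> \<open>open T\<close>])
    finally show ?thesis by (simp add: funpow_Suc_right del: funpow.simps)
  qed
  have deriv_f: "deriv f w = h w * (c * exp w)" if "w \<in> T" for w
    using ode[OF that] unfolding h_def by (metis mult.commute)
  have "(deriv ^^ Suc n) f z = (deriv ^^ n) (deriv f) z"
    by (simp add: funpow_Suc_right del: funpow.simps)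
  also have "\<dots> = (deriv ^^ n) (\<lambda>w. h w * (c * exp w)) z"
    by (rule higher_deriv_transform_within_open[OF hol' _ \<open>open T\<close> \<open>z \<in> T\<close> deriv_f])
       (use hol_h in \<open>intro holomorphic_intros\<close>)
  also have "\<dots> = (\<Sum>l = 0..n.
      of_nat (n choose l) * (deriv ^^ l) h z * (deriv ^^ (n - l)) (\<lambda>w. c * exp w) z)"
    by (rule higher_deriv_mult[OF hol_h _ \<open>open T\<close> \<open>z \<in> T\<close>]) (intro holomorphic_intros)
  also have "\<dots> = c * exp z *
      (\<Sum>l = 0..n. of_nat (n choose l) * ((deriv ^^ l) f z - a * (deriv ^^ Suc l) f z))"
    by (simp only: higher_deriv_h higher_deriv_cmult_exp sum_distrib_left) (simp add: mult_ac)
  finally show ?thesis .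
qed

definition deg_bell_gf_complex :: "real \<Rightarrow> real \<Rightarrow> complex \<Rightarrow> complex" where
  "deg_bell_gf_complex lam x z =
     exp (of_real (1 / lam) * Ln ((1 + of_real (lam * x) * exp z) / of_real (1 + lam * x)))"

definition deg_bell_domain :: "real \<Rightarrow> real \<Rightarrow> complex set" where
  "deg_bell_domain lam x = {z. 0 < Re (1 + of_real (lam * x) * exp z)}"

lemma open_deg_bell_domain: "open (deg_bell_domain lam x)"
  unfolding deg_bell_domain_def by (intro open_Collect_less continuous_intros)

lemma deg_bell_domain_not_nonpos_Reals:
  assumes "1 + lam * x > 0" and "z \<in> deg_bell_domain lam x"
  shows "(1 + of_real (lam * x) * exp z) / of_real (1 + lam * x) \<notin> \<real>\<^sub>\<le>\<^sub>0"
  using assms by (auto simp: deg_bell_domain_def complex_nonpos_Reals_iff divide_le_0_iff)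

lemma deg_bell_gf_complex_holomorphic:
  assumes "1 + lam * x > 0"
  shows "deg_bell_gf_complex lam x holomorphic_on deg_bell_domain lam x"
  unfolding deg_bell_gf_complex_def using deg_bell_domain_not_nonpos_Reals[OF assms]
  by (intro holomorphic_intros) auto

lemma deg_bell_gf_complex_of_real:
  assumes "1 + lam * x > 0" and "1 + lam * x * exp t > 0"
  shows "deg_bell_gf_complex lam x (of_real t) = of_real (deg_bell_gf lam x t)"
proof -
  have pos: "(1 + lam * x * exp t) / (1 + lam * x) > 0"
    using assms by simp
  have "deg_bell_gf_complex lam x (of_real t)
          = exp (of_real (1 / lam) * Ln (of_real ((1 + lam * x * exp t) / (1 + lam * x))))"
    by (simp add: deg_bell_gf_complex_def exp_of_real)
  also have "\<dots> = of_real (exp (1 / lam * ln ((1 + lam * x * exp t) / (1 + lam * x))))"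
    using pos by (simp only: Ln_of_real of_real_mult[symmetric] exp_of_real)
  finally show ?thesis
    using assms pos by (simp add: deg_bell_gf_def powr_def mult.commute)
qed

lemma deriv_deg_bell_gf_complex:
  assumes "lam \<noteq> 0" and "1 + lam * x > 0" and z: "z \<in> deg_bell_domain lam x"
  defines "f \<equiv> deg_bell_gf_complex lam x"
  shows "deriv f z = of_real x * exp z * (f z - of_real lam * deriv f z)"
proof -
  have nonzero: "1 + of_real (lam * x) * exp z \<noteq> 0"
    using z unfolding deg_bell_domain_def mem_Collect_eq
    by (metis order_less_irrefl zero_complex.sel(1))
  have "(f has_field_derivative f z * (of_real (1 / lam) *
          (inverse ((1 + of_real (lam * x) * exp z) / of_real (1 + lam * x)) *
           (of_real (lam * x) * exp z / of_real (1 + lam * x))))) (at z)"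
    unfolding f_def deg_bell_gf_complex_def
    using deg_bell_domain_not_nonpos_Reals[OF assms(2) z]
    by (auto intro!: derivative_eq_intros)
  then have "deriv f z = f z * (of_real (1 / lam) *
          (inverse ((1 + of_real (lam * x) * exp z) / of_real (1 + lam * x)) *
           (of_real (lam * x) * exp z / of_real (1 + lam * x))))"
    by (rule DERIV_imp_deriv)
  also have "\<dots> = f z * (of_real x * exp z) / (1 + of_real (lam * x) * exp z)"
    using nonzero assms(1,2) by (simp add: field_simps flip: of_real_add)
  finally have "deriv f z * (1 + of_real (lam * x) * exp z) = f z * (of_real x * exp z)"
    using nonzero by (simp add: field_simps)
  then show ?thesis by (simp add: algebra_simps)
qed

lemma Bel_eq_Re_higher_deriv:
  assumes "1 + lam * x > 0"
  shows "Bel n lam x = Re ((deriv ^^ n) (deg_bell_gf_complex lam x) 0)"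
proof -
  let ?S = "{t. 1 + lam * x * exp t > 0}"
  have "(deriv ^^ n) (deg_bell_gf lam x) 0
      = Re ((deriv ^^ n) (deg_bell_gf_complex lam x) (of_real 0))"
  proof (rule higher_deriv_real_restriction)
    show "open ?S" by (intro open_Collect_less continuous_intros)
    show "of_real t \<in> deg_bell_domain lam x" if "t \<in> ?S" for t
      using that by (simp add: deg_bell_domain_def exp_of_real)
    show "deg_bell_gf lam x t = Re (deg_bell_gf_complex lam x (of_real t))" if "t \<in> ?S" for t
      using that deg_bell_gf_complex_of_real[OF assms] by simp
  qed (use assms in \<open>simp_all add: deg_bell_gf_complex_holomorphic open_deg_bell_domain\<close>)
  then show ?thesis by (simp add: Bel_def)
qed

theorem theorem8:
  fixes lam x :: real and n :: nat
  assumes "lam \<noteq> 0" and "1 + lam * x > 0"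
  shows "Bel (n + 1) lam x
         = x * (\<Sum>l = 0..n. real (n choose l) * (Bel l lam x - lam * Bel (l + 1) lam x))"
proof -
  let ?F = "deg_bell_gf_complex lam x"
  have "0 \<in> deg_bell_domain lam x"
    using assms(2) by (simp add: deg_bell_domain_def)
  then have "(deriv ^^ Suc n) ?F 0 = of_real x * exp 0 *
      (\<Sum>l = 0..n. of_nat (n choose l) * ((deriv ^^ l) ?F 0 - of_real lam * (deriv ^^ Suc l) ?F 0))"
    by (rule higher_deriv_Suc_of_exp_ode[OF deg_bell_gf_complex_holomorphic[OF assms(2)]
          open_deg_bell_domain])
       (rule deriv_deg_bell_gf_complex[OF assms])
  then show ?thesis
    by (simp add: Bel_eq_Re_higher_deriv[OF assms(2)] Re_sum del: funpow.simps)
qed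

end
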